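(* Let $k$ be a positive integer and let $G$ be a graph obtained from $K_4$ by subdividing its edges (each edge replaced by a path) such that, in a planar embedding of $G$, each of the four faces is a cycle of length $2k+1$. Then $G^{(2k-1)}$ is isomorphic to the complete graph $K_{4k}$.
   Context: For a graph $G$ and a positive integer $m$, the $m$-th walk-power $G^{(m)}$ is the graph with vertex set $V(G)$ in which two distinct vertices $x,y$ are adjacent if and only if there is a walk of length exactly $m$ in $G$ connecting $x$ and $y$. *)

theory Defs
  imports Main
begin

text \<open>Simple graphs are given by a vertex set V and a symmetric irreflexive
  adjacency relation E.\<close>

definition is_walk :: "('a \<Rightarrow> 'a \<Rightarrow> bool) \<Rightarrow> 'a list \<Rightarrow> bool" where
  "is_walk E xs \<longleftrightarrow> xs \<noteq> [] \<and> (\<forall>i. Suc i < length xs \<longrightarrow> E (xs ! i) (xs ! Suc i))"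

definition walk_power :: "'a set \<Rightarrow> ('a \<Rightarrow> 'a \<Rightarrow> bool) \<Rightarrow> nat \<Rightarrow> 'a \<Rightarrow> 'a \<Rightarrow> bool" where
  "walk_power V E m x y \<longleftrightarrow> x \<in> V \<and> y \<in> V \<and> x \<noteq> y \<and>
     (\<exists>xs. is_walk E xs \<and> length xs = Suc m \<and> hd xs = x \<and> last xs = y)"

definition graph_iso :: "'a set \<Rightarrow> ('a \<Rightarrow> 'a \<Rightarrow> bool) \<Rightarrow> 'b set \<Rightarrow> ('b \<Rightarrow> 'b \<Rightarrow> bool) \<Rightarrow> bool" where
  "graph_iso V1 E1 V2 E2 \<longleftrightarrow>
     (\<exists>f. bij_betw f V1 V2 \<and> (\<forall>x\<in>V1. \<forall>y\<in>V1. E1 x y \<longleftrightarrow> E2 (f x) (f y)))"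

definition K_V :: "nat \<Rightarrow> nat set" where "K_V n = {0..<n}"
definition K_E :: "nat \<Rightarrow> nat \<Rightarrow> bool" where "K_E x y \<longleftrightarrow> x \<noteq> y"

text \<open>Subdivision of K4 on branch vertices 0,1,2,3. For a < b < 4 the edge ab is
  replaced by a path of length l a b \<ge> 1; its interior vertices are Sub a b i,
  0 < i < l a b.\<close>
datatype sv = Br nat | Sub nat nat nat

definition pv :: "(nat \<Rightarrow> nat \<Rightarrow> nat) \<Rightarrow> nat \<Rightarrow> nat \<Rightarrow> nat \<Rightarrow> sv" where
  "pv l a b i = (if i = 0 then Br a else if i = l a b then Br b else Sub a b i)"

definition subdiv_V :: "(nat \<Rightarrow> nat \<Rightarrow> nat) \<Rightarrow> sv set" where
  "subdiv_V l = {Br a | a. a < 4} \<union> {Sub a b i | a b i. a < b \<and> b < 4 \<and> 0 < i \<and> i < l a b}"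

definition subdiv_E :: "(nat \<Rightarrow> nat \<Rightarrow> nat) \<Rightarrow> sv \<Rightarrow> sv \<Rightarrow> bool" where
  "subdiv_E l x y \<longleftrightarrow> (\<exists>a b i. a < b \<and> b < 4 \<and> i < l a b \<and>
      {x, y} = {pv l a b i, pv l a b (Suc i)})"

end

(* Every vertex of the subdivision lies on one of the six branch paths, and between two
   distinct vertices there are always two walks around the skeleton whose lengths have
   an odd sum bounded by the face length 2k+1 (or, for vertices on opposite branch
   paths, a pair of walks of equal parity and total length at most 4k, using that
   opposite branch paths have equal length).  Either way one of them is an odd walk of
   length below 2k, and going back and forth along an edge pads it to length exactly
   2k-1.  Since the subdivision has 4k vertices, the walk-power is complete. *)

theory Submission
  imports Defs
begin

definition walk_betw :: "('a \<Rightarrow> 'a \<Rightarrow> bool) \<Rightarrow> nat \<Rightarrow> 'a \<Rightarrow> 'a \<Rightarrow> bool" where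
  "walk_betw E n u v \<longleftrightarrow> (\<exists>xs. is_walk E xs \<and> length xs = Suc n \<and> hd xs = u \<and> last xs = v)"

lemma walk_power_iff_walk_betw:
  "walk_power V E n u v \<longleftrightarrow> u \<in> V \<and> v \<in> V \<and> u \<noteq> v \<and> walk_betw E n u v"
  by (simp add: walk_power_def walk_betw_def)

lemma is_walk_Cons_Cons: "is_walk E (x # y # xs) \<longleftrightarrow> E x y \<and> is_walk E (y # xs)"
  by (auto simp: is_walk_def nth_Cons split: nat.splits)

lemma walk_betw_0_iff [simp]: "walk_betw E 0 u v \<longleftrightarrow> u = v"
  unfolding walk_betw_def by (auto simp: is_walk_def length_Suc_conv intro!: exI[of _ "[v]"])

lemma walk_betw_Suc_iff: "walk_betw E (Suc n) u v \<longleftrightarrow> (\<exists>w. E u w \<and> walk_betw E n w v)"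
proof
  assume "walk_betw E (Suc n) u v"
  then obtain w xs where "is_walk E (u # w # xs)" "length xs = n" "last (w # xs) = v"
    by (auto simp: walk_betw_def length_Suc_conv)
  then show "\<exists>w. E u w \<and> walk_betw E n w v"
    unfolding walk_betw_def by (intro exI[of _ w] conjI exI[of _ "w # xs"]) (auto simp: is_walk_Cons_Cons)
next
  assume "\<exists>w. E u w \<and> walk_betw E n w v"
  then obtain w xs where "E u w" "is_walk E (w # xs)" "length xs = n" "last (w # xs) = v"
    by (auto simp: walk_betw_def length_Suc_conv)
  then show "walk_betw E (Suc n) u v"
    unfolding walk_betw_def by (intro exI[of _ "u # w # xs"]) (simp add: is_walk_Cons_Cons)
qed

lemma walk_betw_edge: "E u v \<Longrightarrow> walk_betw E 1 u v"
  by (auto simp: walk_betw_Suc_iff)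

lemma walk_betw_add: "walk_betw E m u v \<Longrightarrow> walk_betw E n v w \<Longrightarrow> walk_betw E (m + n) u w"
  by (induction m arbitrary: u) (auto simp: walk_betw_Suc_iff)

lemma walk_betw_commute:
  assumes "symp E"
  shows "walk_betw E n u v \<Longrightarrow> walk_betw E n v u"
proof (induction n arbitrary: u)
  case (Suc n)
  then obtain w where "E w u" "walk_betw E n v w"
    using assms by (auto simp: walk_betw_Suc_iff dest: sympD)
  then show ?case
    using walk_betw_add[of E n v w 1 u] walk_betw_edge by fastforce
qed simp

lemma walk_betw_add_even:
  assumes "symp E" "E v w" "walk_betw E n u v"
  shows "walk_betw E (n + 2 * t) u v"
proof (induction t)
  case (Suc t)
  have "walk_betw E 2 v v"
    using assms(1,2) walk_betw_add[OF walk_betw_edge walk_betw_edge, of E v w v]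
    by (simp add: sympD numeral_2_eq_2)
  from walk_betw_add[OF Suc.IH this] show ?case
    by (simp add: algebra_simps)
qed (use assms in simp)

text \<open>The odd one of the two walks is shorter than \<open>2k+1\<close> because its partner is nonempty.\<close>
lemma short_odd_walk_of_complementary:
  assumes "walk_betw E m u v" "walk_betw E n u v" "m + n = 2 * k + 1" "u \<noteq> v"
  shows "\<exists>d<2 * k. odd d \<and> walk_betw E d u v"
proof -
  have "m \<noteq> 0" "n \<noteq> 0" using assms(1,2,4) by (metis walk_betw_0_iff)+
  then show ?thesis
  proof (cases "odd m")
    case True then show ?thesis using assms \<open>n \<noteq> 0\<close> by (intro exI[of _ m]) presburger
  next
    case False then show ?thesis using assms \<open>m \<noteq> 0\<close> by (intro exI[of _ n]) presburger
  qed
qed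

lemma short_odd_walk_of_odd_pair:
  assumes "walk_betw E m u v" "walk_betw E n u v" "odd m" "even (m + n)" "m + n \<le> 4 * k"
  shows "\<exists>d<2 * k. odd d \<and> walk_betw E d u v"
proof (cases "m \<le> n")
  case True then show ?thesis using assms by (intro exI[of _ m]) presburger
next
  case False then show ?thesis using assms by (intro exI[of _ n]) presburger
qed

lemma walk_power_of_short_odd_walk:
  assumes "symp E" "E v w" "u \<in> V" "v \<in> V" "u \<noteq> v"
    and "d < 2 * k" "odd d" "walk_betw E d u v"
  shows "walk_power V E (2 * k - 1) u v"
proof -
  have "d + 2 * ((2 * k - 1 - d) div 2) = 2 * k - 1"
    using assms(6,7) by presburger
  then show ?thesis
    using walk_betw_add_even[OF assms(1,2,8)] assms(3-5)
    by (metis walk_power_iff_walk_betw)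
qed

lemma graph_iso_complete:
  assumes "finite V" "card V = n" "\<And>x y. x \<in> V \<Longrightarrow> y \<in> V \<Longrightarrow> R x y \<longleftrightarrow> x \<noteq> y"
  shows "graph_iso V R (K_V n) K_E"
proof -
  obtain f where f: "bij_betw f V {0..<n}"
    using assms(1,2) by (metis ex_bij_betw_finite_nat atLeast0LessThan)
  then have "R x y \<longleftrightarrow> K_E (f x) (f y)" if "x \<in> V" "y \<in> V" for x y
    using that assms(3) by (auto simp: K_E_def bij_betw_def inj_on_def)
  then show ?thesis
    using f unfolding graph_iso_def K_V_def by blast
qed

lemma less_4_cases: "(p::nat) < 4 \<Longrightarrow> p = 0 \<or> p = 1 \<or> p = 2 \<or> p = 3"
  by auto

lemma symp_subdiv_E: "symp (subdiv_E l)"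
  unfolding subdiv_E_def by (rule sympI) (metis insert_commute)

text \<open>\<open>branch_vertex l p q i\<close> is the vertex at distance \<open>i\<close> from \<open>Br p\<close> on the path
  replacing the edge \<open>pq\<close> of \<open>K\<^sub>4\<close>; unlike \<open>pv\<close> it does not require \<open>p < q\<close>.\<close>
definition branch_len :: "(nat \<Rightarrow> nat \<Rightarrow> nat) \<Rightarrow> nat \<Rightarrow> nat \<Rightarrow> nat" where
  "branch_len l p q = (if p < q then l p q else l q p)"

definition branch_vertex :: "(nat \<Rightarrow> nat \<Rightarrow> nat) \<Rightarrow> nat \<Rightarrow> nat \<Rightarrow> nat \<Rightarrow> sv" where
  "branch_vertex l p q i = (if p < q then pv l p q i else pv l q p (l q p - i))"

lemma branch_len_commute: "branch_len l p q = branch_len l q p"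
  unfolding branch_len_def by (cases p q rule: linorder_cases) auto

lemma branch_vertex_reverse:
  "p \<noteq> q \<Longrightarrow> i \<le> branch_len l p q \<Longrightarrow>
    branch_vertex l q p (branch_len l p q - i) = branch_vertex l p q i"
  unfolding branch_vertex_def branch_len_def by (cases p q rule: linorder_cases) auto

locale K4_subdivision =
  fixes l :: "nat \<Rightarrow> nat \<Rightarrow> nat"
  assumes subdivision_len_pos: "\<forall>a b. a < b \<and> b < 4 \<longrightarrow> 1 \<le> l a b"
begin

abbreviation "V \<equiv> subdiv_V l"
abbreviation "E \<equiv> subdiv_E l"
abbreviation "L \<equiv> branch_len l"
abbreviation "P \<equiv> branch_vertex l"

lemmas walk_commute = walk_betw_commute[OF symp_subdiv_E]

lemma branch_len_pos: "p \<noteq> q \<Longrightarrow> p < 4 \<Longrightarrow> q < 4 \<Longrightarrow> 1 \<le> L p q"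
  using subdivision_len_pos unfolding branch_len_def by (cases p q rule: linorder_cases) auto

lemma branch_vertex_0: "p \<noteq> q \<Longrightarrow> p < 4 \<Longrightarrow> q < 4 \<Longrightarrow> P p q 0 = Br p"
  using branch_len_pos[of p q] unfolding branch_vertex_def branch_len_def pv_def
  by (cases p q rule: linorder_cases) auto

lemma branch_vertex_edge:
  assumes "p \<noteq> q" "p < 4" "q < 4" "i < L p q"
  shows "E (P p q i) (P p q (Suc i))"
proof (cases "p < q")
  case True
  then show ?thesis
    using assms unfolding subdiv_E_def branch_vertex_def branch_len_def by auto
next
  case False
  define j where "j = l q p - Suc i"
  have "q < p" "j < l q p" "l q p - i = Suc j"
    using False assms(1,4) branch_len_def[of l p q] j_def by (auto split: if_splits)
  then show ?thesis
    using assms(2) unfolding subdiv_E_def branch_vertex_def j_def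
    by (intro exI[of _ q] exI[of _ p] exI[of _ j]) (auto simp: j_def insert_commute)
qed

lemma walk_along_branch:
  "p \<noteq> q \<Longrightarrow> p < 4 \<Longrightarrow> q < 4 \<Longrightarrow> i + n \<le> L p q \<Longrightarrow> walk_betw E n (P p q i) (P p q (i + n))"
proof (induction n)
  case (Suc n)
  then show ?case
    using walk_betw_add[OF Suc.IH walk_betw_edge[of E, OF branch_vertex_edge[of p q "i + n"]]]
    by simp
qed simp

lemma walk_branch_vertex_start:
  "p \<noteq> q \<Longrightarrow> p < 4 \<Longrightarrow> q < 4 \<Longrightarrow> i \<le> L p q \<Longrightarrow> walk_betw E i (P p q i) (Br p)"
  using walk_along_branch[of p q 0 i] branch_vertex_0[of p q]
  by (simp add: walk_commute)

lemma walk_branch_vertex_end: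
  "p \<noteq> q \<Longrightarrow> p < 4 \<Longrightarrow> q < 4 \<Longrightarrow> i \<le> L p q \<Longrightarrow> walk_betw E (L p q - i) (P p q i) (Br q)"
  using walk_branch_vertex_start[of q p "L p q - i"] branch_vertex_reverse[of p q i l]
  by (simp add: branch_len_commute)

lemma walk_branch:
  "p \<noteq> q \<Longrightarrow> p < 4 \<Longrightarrow> q < 4 \<Longrightarrow> walk_betw E (L p q) (Br p) (Br q)"
  using walk_branch_vertex_end[of p q 0] branch_vertex_0[of p q] by simp

definition on_branch :: "nat \<Rightarrow> nat \<Rightarrow> sv \<Rightarrow> bool" where
  "on_branch p q u \<longleftrightarrow> p \<noteq> q \<and> p < 4 \<and> q < 4 \<and> (\<exists>i \<le> L p q. u = P p q i)"

lemma on_branch_commute: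
  assumes "on_branch p q u"
  shows "on_branch q p u"
proof -
  obtain i where "p \<noteq> q" "p < 4" "q < 4" "i \<le> L p q" "u = P p q i"
    using assms unfolding on_branch_def by blast
  then show ?thesis
    using branch_vertex_reverse[of p q i l] branch_len_commute[of l p q]
    unfolding on_branch_def by (intro conjI exI[of _ "L p q - i"]) auto
qed

lemma subdiv_V_cases:
  assumes "u \<in> V"
  obtains (Br) a where "u = Br a" "a < 4"
    | (Sub) a b i where "u = Sub a b i" "a < b" "b < 4" "0 < i" "i < l a b"
  using assms unfolding subdiv_V_def by blast

lemma subdiv_V_on_branch:
  assumes "u \<in> V"
  obtains p q where "on_branch p q u"
  using assms
proof (cases rule: subdiv_V_cases)
  case (Br a)
  moreover define b :: nat where "b = (if a = 0 then 1 else 0)"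
  ultimately have "on_branch a b u"
    using branch_vertex_0[of a b] unfolding on_branch_def by (auto intro!: exI[of _ 0])
  then show thesis by (rule that)
next
  case (Sub a b i)
  then have "on_branch a b u"
    unfolding on_branch_def branch_vertex_def branch_len_def pv_def by (auto intro!: exI[of _ i])
  then show thesis by (rule that)
qed

lemma subdiv_V_neighbour:
  assumes "u \<in> V"
  obtains w where "E u w"
proof -
  obtain p q i where i: "p \<noteq> q" "p < 4" "q < 4" "i \<le> L p q" "u = P p q i"
    using subdiv_V_on_branch[OF assms] unfolding on_branch_def by blast
  show thesis
  proof (cases "i < L p q")
    case True
    then show thesis using that branch_vertex_edge i by blast
  next
    case False
    then have "i = Suc (i - 1)" "i - 1 < L p q" using i branch_len_pos[of p q] by auto
    then show thesis
      using that branch_vertex_edge[of p q "i - 1"] i symp_subdiv_E by (metis sympD)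
  qed
qed

lemma card_subdiv_V:
  "finite V" "card V + 2 = l 0 1 + l 0 2 + l 0 3 + l 1 2 + l 1 3 + l 2 3"
proof -
  define pairs :: "(nat \<times> nat) set" where "pairs = {(0, 1), (0, 2), (0, 3), (1, 2), (1, 3), (2, 3)}"
  define S where "S = (\<lambda>((a, b), i). Sub a b i) ` (SIGMA (a, b):pairs. {0<..<l a b})"
  have V: "V = Br ` {..<4} \<union> S"
  proof (intro equalityI subsetI)
    fix u assume "u \<in> V"
    then show "u \<in> Br ` {..<4} \<union> S"
    proof (cases rule: subdiv_V_cases)
      case (Sub a b i)
      then have "(a, b) \<in> pairs" unfolding pairs_def by (auto simp: less_Suc_eq numeral_eq_Suc)
      then have "((a, b), i) \<in> (SIGMA (a, b):pairs. {0<..<l a b})" using Sub by auto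
      then have "u \<in> S" unfolding S_def using Sub by (auto intro: image_eqI[where x = "((a, b), i)"])
      then show ?thesis by simp
    qed auto
  qed (auto simp: subdiv_V_def S_def pairs_def)
  have "card S = card (SIGMA (a, b):pairs. {0<..<l a b})"
    unfolding S_def by (rule card_image) (auto simp: inj_on_def)
  also have "\<dots> = (l 0 1 - 1) + (l 0 2 - 1) + (l 0 3 - 1) + (l 1 2 - 1) + (l 1 3 - 1) + (l 2 3 - 1)"
    by (subst card_SigmaI) (auto simp: pairs_def)
  moreover have "1 \<le> l 0 1" "1 \<le> l 0 2" "1 \<le> l 0 3" "1 \<le> l 1 2" "1 \<le> l 1 3" "1 \<le> l 2 3"
    using subdivision_len_pos by auto
  ultimately have "card S + 6 = l 0 1 + l 0 2 + l 0 3 + l 1 2 + l 1 3 + l 2 3"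
    by linarith
  moreover have "finite S" unfolding S_def pairs_def by auto
  moreover have "card (Br ` {..<4::nat}) = 4"
    by (subst card_image) (auto simp: inj_on_def)
  moreover have "Br ` {..<4} \<inter> S = {}" unfolding S_def by auto
  ultimately show "finite V" "card V + 2 = l 0 1 + l 0 2 + l 0 3 + l 1 2 + l 1 3 + l 2 3"
    unfolding V by (auto simp: card_Un_disjoint)
qed

end

locale K4_face_subdivision = K4_subdivision +
  fixes k :: nat
  assumes face_len: "\<forall>a b c. a < b \<and> b < c \<and> c < 4 \<longrightarrow> l a b + l b c + l a c = 2 * k + 1"
begin

lemma opposite_len: "l 2 3 = l 0 1" "l 1 3 = l 0 2" "l 1 2 = l 0 3"
  using face_len[rule_format, of 0 1 2] face_len[rule_format, of 0 1 3]
    face_len[rule_format, of 0 2 3] face_len[rule_format, of 1 2 3]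
  by linarith+

lemma branch_len_face:
  assumes "p < 4" "q < 4" "r < 4" "distinct [p, q, r]"
  shows "L p q + L q r + L p r = 2 * k + 1"
  using assms face_len[rule_format, of 0 1 2] opposite_len
  by (insert less_4_cases[OF assms(1)] less_4_cases[OF assms(2)] less_4_cases[OF assms(3)],
      elim disjE, simp_all add: branch_len_def)

lemma branch_len_opposite:
  assumes "p < 4" "q < 4" "r < 4" "s < 4" "distinct [p, q, r, s]"
  shows "L r s = L p q"
  using assms opposite_len
  by (insert less_4_cases[OF assms(1)] less_4_cases[OF assms(2)]
      less_4_cases[OF assms(3)] less_4_cases[OF assms(4)],
      elim disjE, simp_all add: branch_len_def)

lemma card_subdiv_V_face: "card V = 4 * k"
  using card_subdiv_V(2) opposite_len face_len[rule_format, of 0 1 2] by simp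

lemma same_branch_short_odd_walk:
  assumes "on_branch p q u" "on_branch p q v" "u \<noteq> v"
  shows "\<exists>d<2 * k. odd d \<and> walk_betw E d u v"
proof -
  have pq: "p \<noteq> q" "p < 4" "q < 4"
    using assms(1) unfolding on_branch_def by auto
  obtain r where r: "r < 4" "r \<noteq> p" "r \<noteq> q"
    using pq by (intro that[of "if 0 \<notin> {p, q} then 0 else if 1 \<notin> {p, q} then 1 else 2"]) auto
  have ordered: "\<exists>d<2 * k. odd d \<and> walk_betw E d (P p q i) (P p q j)"
    if "i \<le> j" "j \<le> L p q" "P p q i \<noteq> P p q j" for i j
  proof -
    have "walk_betw E (j - i) (P p q i) (P p q j)"
      using walk_along_branch[of p q i "j - i"] pq that(1,2) by simp
    moreover have "walk_betw E (i + L p r + L r q + (L p q - j)) (P p q i) (P p q j)"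
      using walk_betw_add[OF walk_betw_add[OF walk_betw_add[OF
            walk_branch_vertex_start[of p q i] walk_branch[of p r]] walk_branch[of r q]]
            walk_commute[OF walk_branch_vertex_end[of p q j]]] pq r that(1,2) by auto
    moreover have "(j - i) + (i + L p r + L r q + (L p q - j)) = 2 * k + 1"
      using branch_len_face[of p r q] pq r that(1,2) by simp
    ultimately show ?thesis
      using that(3) by (rule short_odd_walk_of_complementary)
  qed
  obtain i j where "i \<le> L p q" "j \<le> L p q" "u = P p q i" "v = P p q j"
    using assms(1,2) unfolding on_branch_def by blast
  note ij = this
  show ?thesis
  proof (cases "i \<le> j")
    case True
    then show ?thesis using ordered[of i j] ij assms(3) by blast
  next
    case False
    then obtain d where "d < 2 * k" "odd d" "walk_betw E d v u"
      using ordered[of j i] ij assms(3) by auto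
    then show ?thesis using walk_commute by blast
  qed
qed

lemma adjacent_branches_short_odd_walk:
  assumes "on_branch p q u" "on_branch p r v" "q \<noteq> r" "u \<noteq> v"
  shows "\<exists>d<2 * k. odd d \<and> walk_betw E d u v"
proof -
  obtain i j where ij: "i \<le> L p q" "j \<le> L p r" "u = P p q i" "v = P p r j"
    and pqr: "p \<noteq> q" "p \<noteq> r" "p < 4" "q < 4" "r < 4"
    using assms(1,2) unfolding on_branch_def by blast
  have "walk_betw E (i + j) u v"
    using walk_betw_add[OF walk_branch_vertex_start[of p q i]
        walk_commute[OF walk_branch_vertex_start[of p r j]]] ij pqr by auto
  moreover have "walk_betw E ((L p q - i) + L q r + (L p r - j)) u v"
    using walk_betw_add[OF walk_betw_add[OF walk_branch_vertex_end[of p q i] walk_branch[of q r]]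
        walk_commute[OF walk_branch_vertex_end[of p r j]]] ij pqr assms(3) by auto
  moreover have "(i + j) + ((L p q - i) + L q r + (L p r - j)) = 2 * k + 1"
    using branch_len_face[of p q r] pqr assms(3) ij(1,2) by simp
  ultimately show ?thesis
    using assms(4) by (rule short_odd_walk_of_complementary)
qed

lemma opposite_branches_short_odd_walk:
  assumes "on_branch p q u" "on_branch r s v" "distinct [p, q, r, s]"
  shows "\<exists>d<2 * k. odd d \<and> walk_betw E d u v"
proof -
  obtain i j where ij: "i \<le> L p q" "j \<le> L r s" "u = P p q i" "v = P r s j"
    and lt: "p < 4" "q < 4" "r < 4" "s < 4"
    using assms(1,2) unfolding on_branch_def by blast
  have d: "p \<noteq> q" "p \<noteq> r" "p \<noteq> s" "q \<noteq> r" "q \<noteq> s" "r \<noteq> s"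
    using assms(3) by auto
  define X Y Z where "X = L p q" and "Y = L p r" and "Z = L p s"
  have lens: "L r s = X" "L q s = Y" "L q r = Z"
    using branch_len_opposite[of p q r s] branch_len_opposite[of p r q s]
      branch_len_opposite[of p s q r] lt assms(3) unfolding X_def Y_def Z_def by auto
  have sum: "X + Z + Y = 2 * k + 1" "1 \<le> Y" "1 \<le> Z"
    using branch_len_face[of p q r] branch_len_pos[of p r] branch_len_pos[of p s] lt d lens
    unfolding X_def Y_def Z_def by auto
  have w1: "walk_betw E (i + Y + j) u v"
    using walk_betw_add[OF walk_betw_add[OF walk_branch_vertex_start[of p q i] walk_branch[of p r]]
        walk_commute[OF walk_branch_vertex_start[of r s j]]] ij lt d unfolding Y_def by auto
  have w2: "walk_betw E (i + Z + (X - j)) u v"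
    using walk_betw_add[OF walk_betw_add[OF walk_branch_vertex_start[of p q i] walk_branch[of p s]]
        walk_commute[OF walk_branch_vertex_end[of r s j]]] ij lt d lens unfolding Z_def by auto
  have w3: "walk_betw E ((X - i) + Z + j) u v"
    using walk_betw_add[OF walk_betw_add[OF walk_branch_vertex_end[of p q i] walk_branch[of q r]]
        walk_commute[OF walk_branch_vertex_start[of r s j]]] ij lt d lens unfolding X_def by auto
  have w4: "walk_betw E ((X - i) + Y + (X - j)) u v"
    using walk_betw_add[OF walk_betw_add[OF walk_branch_vertex_end[of p q i] walk_branch[of q s]]
        walk_commute[OF walk_branch_vertex_end[of r s j]]] ij lt d lens unfolding X_def by auto
  text \<open>The lengths of \<open>w1\<close> and \<open>w2\<close> have odd sum, those of \<open>w1, w4\<close> and of \<open>w2, w3\<close>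
    have even sum at most \<open>4k\<close>.\<close>
  have "i \<le> X" "j \<le> X" using ij lens unfolding X_def by auto
  then have pair_sums: "(i + Y + j) + ((X - i) + Y + (X - j)) = 2 * (X + Y)"
      "(i + Z + (X - j)) + ((X - i) + Z + j) = 2 * (X + Z)"
      "(i + Y + j) + (i + Z + (X - j)) = 2 * i + (2 * k + 1)"
    using sum by auto
  show ?thesis
  proof (cases "odd (i + Y + j)")
    case True
    then show ?thesis using short_odd_walk_of_odd_pair[OF w1 w4] pair_sums(1) sum by auto
  next
    case False
    then have "odd (i + Z + (X - j))" using pair_sums(3) by presburger
    then show ?thesis using short_odd_walk_of_odd_pair[OF w2 w3] pair_sums(2) sum by auto
  qed
qed

lemma short_odd_walk:
  assumes "u \<in> V" "v \<in> V" "u \<noteq> v"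
  shows "\<exists>d<2 * k. odd d \<and> walk_betw E d u v"
proof -
  obtain p q r s where u: "on_branch p q u" and v: "on_branch r s v"
    using assms(1,2) subdiv_V_on_branch by metis
  show ?thesis
  proof (cases "distinct [p, q, r, s]")
    case True
    then show ?thesis using opposite_branches_short_odd_walk u v by blast
  next
    case False
    then have "p = r \<or> p = s \<or> q = r \<or> q = s"
      using u v unfolding on_branch_def by auto
    then obtain a b c where abc: "on_branch a b u" "on_branch a c v"
      using u v on_branch_commute[OF u] on_branch_commute[OF v] by (elim disjE) blast+
    show ?thesis
    proof (cases "b = c")
      case True
      then show ?thesis using same_branch_short_odd_walk abc assms(3) by blast
    next
      case False
      then show ?thesis using adjacent_branches_short_odd_walk abc assms(3) by blast
    qed
  qed
qed

end

theorem lemma1: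
  fixes k :: nat and l :: "nat \<Rightarrow> nat \<Rightarrow> nat"
  assumes "0 < k"
    and "\<forall>a b. a < b \<and> b < 4 \<longrightarrow> 1 \<le> l a b"
    and "\<forall>a b c. a < b \<and> b < c \<and> c < 4 \<longrightarrow> l a b + l b c + l a c = 2 * k + 1"
  shows "graph_iso (subdiv_V l) (walk_power (subdiv_V l) (subdiv_E l) (2 * k - 1))
           (K_V (4 * k)) K_E"
proof -
  interpret K4_face_subdivision l k
    using assms(2,3) by unfold_locales
  show ?thesis
  proof (rule graph_iso_complete[OF card_subdiv_V(1) card_subdiv_V_face])
    fix u v assume uv: "u \<in> V" "v \<in> V"
    show "walk_power V E (2 * k - 1) u v \<longleftrightarrow> u \<noteq> v"
    proof
      assume "u \<noteq> v"
      moreover obtain d where "d < 2 * k" "odd d" "walk_betw E d u v"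
        using short_odd_walk[OF uv \<open>u \<noteq> v\<close>] by blast
      moreover obtain w where "E v w"
        using subdiv_V_neighbour[OF uv(2)] .
      ultimately show "walk_power V E (2 * k - 1) u v"
        using walk_power_of_short_odd_walk[OF symp_subdiv_E] uv by blast
    qed (simp add: walk_power_def)
  qed
qed

end
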